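(* Let $G$ be one of the triangular lattice, the hexagonal lattice, or the kagome lattice, and let $\Omega_G\subset\mathbb{R}^2$ be the orbit of the Grover walk on $G$ (defined in the context). Then \[ \Omega_G \subseteq \{ (x,y)\in \mathbb{R}^2 \;:\; x^2+s(G)\,xy+y^2\leq r(G) \}, \] where $r(G)=1/2$, $1/6$, $1/4$ and $s(G)=-1$, $+1$, $+1$ when $G$ is the triangular, hexagonal, kagome lattice respectively.
   Context: The Grover walk on a graph acts on $\ell^2$ of the symmetric arcs by $(U\psi)(e)=\sum_{f:\,t(f)=o(e)}\big(\tfrac{2}{\deg o(e)}-\delta_{\bar e,f}\big)\psi(f)$. For a crystal lattice (a $\mathbb{Z}^2$-periodic graph with finite quotient graph $G_0$ having vertex set $V_0$), after Fourier transform in the period lattice with wave vector $k=(k_1,k_2)\in[0,2\pi)^2$ (with respect to a chosen basis of the period lattice), the underlying isotropic random walk becomes a twisted random walk $\hat P_k$ on $\ell^2(V_0)$ whose eigenvalues are written $\cos\gamma_j(k)$, $j=1,\dots,|V_0|$, with $\gamma_j(k)=\arccos(\cdot)\in[0,\pi]$. The orbit of the Grover walk is $\Omega_G=\bigcup_{j}\{\nabla\gamma_j(k)=(\partial\gamma_j/\partial k_1,\partial\gamma_j/\partial k_2)\;:\; k\in[0,2\pi)^2,\ \gamma_j \text{ differentiable at } k\}$. Concretely, with the standard choices of period basis used in the paper, the eigenvalues are: (i) triangular lattice ($|V_0|=1$): $\cos\gamma(k)=\tfrac13(\cos k_1+\cos k_2+\cos(k_1+k_2))$; (ii) hexagonal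 lattice ($|V_0|=2$): $\cos\gamma(k)=\pm\tfrac13|1+e^{ik_1}+e^{ik_2}|$; (iii) kagome lattice ($|V_0|=3$): $\cos\gamma(k)\in\{\tfrac14(1\pm|1+e^{ik_1}+e^{ik_2}|)\}\cup\{-\tfrac12\}$. *)

theory Defs
  imports "HOL-Analysis.Analysis"
begin

datatype lattice = Triangular | Hexagonal | Kagome

text \<open>The eigenvalue branches cos gamma_j(k) of the twisted random walk, as functions
  of the wave vector k = (k1,k2).\<close>
fun eig_branches :: "lattice \<Rightarrow> (real \<times> real \<Rightarrow> real) set" where
  "eig_branches Triangular =
     {\<lambda>(k1,k2). (cos k1 + cos k2 + cos (k1 + k2)) / 3}"
| "eig_branches Hexagonal =
     {\<lambda>(k1,k2). cmod (1 + cis k1 + cis k2) / 3,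
      \<lambda>(k1,k2). - (cmod (1 + cis k1 + cis k2) / 3)}"
| "eig_branches Kagome =
     {\<lambda>(k1,k2). (1 + cmod (1 + cis k1 + cis k2)) / 4,
      \<lambda>(k1,k2). (1 - cmod (1 + cis k1 + cis k2)) / 4,
      \<lambda>_. - 1 / 2}"

definition orbit :: "lattice \<Rightarrow> (real \<times> real) set" where
  "orbit G = {g. \<exists>c \<in> eig_branches G. \<exists>k1 k2.
       0 \<le> k1 \<and> k1 < 2 * pi \<and> 0 \<le> k2 \<and> k2 < 2 * pi \<and>
       ((\<lambda>k. arccos (c k)) has_derivative (\<lambda>h. fst g * fst h + snd g * snd h)) (at (k1, k2))}"

fun r_param :: "lattice \<Rightarrow> real" where
  "r_param Triangular = 1 / 2"
| "r_param Hexagonal = 1 / 6"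
| "r_param Kagome = 1 / 4"

fun s_param :: "lattice \<Rightarrow> real" where
  "s_param Triangular = -1"
| "s_param Hexagonal = 1"
| "s_param Kagome = 1"

end

theory Submission
  imports Defs
begin

text \<open>
  Away from the points where an eigenvalue branch c attains its extreme values (there the
  gradient of arccos c vanishes), the gradient of arccos c is -grad c / sqrt (1 - c^2), so it
  suffices to bound the quadratic form of grad c by r (1 - c^2).  Every branch is an affine
  function of F = |1 + e^(ia) + e^(ib)|^2 or of its square root; the triangular branch uses F at
  (a, -b), which flips the sign of the mixed term.  Everything then reduces to one inequality,
  6 (p^2 + pq + q^2) \<le> F (9 - F) where grad F = -2 (p, q): p and q are cross products of
  1 + e^(ia) + e^(ib) with the unit vectors e^(ia), e^(ib), and Cauchy-Schwarz applied to the
  three dot products with 1, e^(ia), e^(ib) gives the bound.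
\<close>

definition quad_form :: "real \<Rightarrow> real \<times> real \<Rightarrow> real" where
  "quad_form s x = fst x ^ 2 + s * fst x * snd x + snd x ^ 2"

lemma quad_form_scaleR [simp]: "quad_form s (t *\<^sub>R x) = t ^ 2 * quad_form s x"
  by (simp add: quad_form_def power2_eq_square algebra_simps)

lemma quad_form_uminus [simp]: "quad_form s (- x) = quad_form s x"
  by (simp add: quad_form_def)

lemma inner_functional_eqD:
  fixes x y :: "'a::real_inner"
  assumes "(\<lambda>h. x \<bullet> h) = (\<lambda>h. y \<bullet> h)"
  shows "x = y"
proof -
  have "(x - y) \<bullet> (x - y) = 0"
    using fun_cong[OF assms, of "x - y"] by (simp add: inner_diff_left)
  then show ?thesis by simp
qed

lemma arccos_gradient_eq_0_at_extremum:
  fixes c :: "'a::real_inner \<Rightarrow> real"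
  assumes D: "((\<lambda>k. arccos (c k)) has_derivative (\<lambda>h. g \<bullet> h)) (at k)"
    and range: "\<forall>y. \<bar>c y\<bar> \<le> 1"
    and extremum: "(\<forall>y. c y \<le> c k) \<or> (\<forall>y. c k \<le> c y)"
  shows "g = 0"
proof -
  have "(\<forall>y\<in>UNIV. arccos (c y) \<le> arccos (c k)) \<or> (\<forall>y\<in>UNIV. arccos (c k) \<le> arccos (c y))"
    using extremum range by (meson abs_le_iff arccos_le_arccos minus_le_iff)
  then have "(\<lambda>h. g \<bullet> h) = (\<lambda>h. 0 \<bullet> h)"
    using differential_zero_maxmin[OF UNIV_I open_UNIV D] by simp
  then show ?thesis by (rule inner_functional_eqD)
qed

lemma has_derivative_arccos_gradient:
  fixes c :: "'a::real_inner \<Rightarrow> real"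
  assumes "(c has_derivative (\<lambda>h. d \<bullet> h)) (at k)" and "\<bar>c k\<bar> < 1"
  shows "((\<lambda>k. arccos (c k)) has_derivative (\<lambda>h. (- (1 / sqrt (1 - c k ^ 2)) *\<^sub>R d) \<bullet> h)) (at k)"
proof -
  have "DERIV arccos (c k) :> inverse (- sqrt (1 - c k ^ 2))"
    using assms(2) by (intro DERIV_arccos) auto
  from DERIV_compose_FDERIV[OF this assms(1)] show ?thesis
    by (simp add: divide_inverse mult.commute)
qed

lemma arccos_gradient_quad_form_le:
  fixes c :: "real \<times> real \<Rightarrow> real"
  assumes D: "((\<lambda>k. arccos (c k)) has_derivative (\<lambda>h. g \<bullet> h)) (at k)"
    and range: "\<forall>y. \<bar>c y\<bar> \<le> 1" and "0 \<le> r"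
    and alt: "(\<forall>y. c y \<le> c k) \<or> (\<forall>y. c k \<le> c y) \<or>
      (c has_derivative (\<lambda>h. d \<bullet> h)) (at k) \<and> quad_form s d \<le> r * (1 - c k ^ 2)"
  shows "quad_form s g \<le> r"
proof (cases "(\<forall>y. c y \<le> c k) \<or> (\<forall>y. c k \<le> c y)")
  case True
  then show ?thesis
    using arccos_gradient_eq_0_at_extremum[OF D range] \<open>0 \<le> r\<close> by (simp add: quad_form_def)
next
  case False
  then have Dc: "(c has_derivative (\<lambda>h. d \<bullet> h)) (at k)"
    and Q: "quad_form s d \<le> r * (1 - c k ^ 2)" using alt by auto
  have "\<bar>c k\<bar> < 1"
  proof -
    obtain y z where "c k < c y" "c z < c k" using False by (auto simp: not_le)
    then show ?thesis using range[rule_format, of y] range[rule_format, of z] by linarith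
  qed
  then have pos: "0 < 1 - c k ^ 2" by (simp add: abs_square_less_1)
  have "g = - (1 / sqrt (1 - c k ^ 2)) *\<^sub>R d"
    using has_derivative_unique[OF D has_derivative_arccos_gradient[OF Dc \<open>\<bar>c k\<bar> < 1\<close>]]
    by (rule inner_functional_eqD)
  then have "quad_form s g = quad_form s d / (1 - c k ^ 2)"
    using pos by (simp add: power_divide real_sqrt_pow2)
  also have "\<dots> \<le> r" using Q pos by (simp add: divide_le_eq)
  finally show ?thesis .
qed

text \<open>With S = u + v + w for the unit vectors u = (1, 0), v = (ca, sa), w = (cb, sb), the
  numbers p and q are the cross products S \<times> v and S \<times> w, and p + q = u \<times> S.\<close>

lemma unit_vector_sum_cross_bound:
  fixes ca sa cb sb :: real
  assumes unit_a: "ca\<^sup>2 + sa\<^sup>2 = 1" and unit_b: "cb\<^sup>2 + sb\<^sup>2 = 1"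
  defines "X \<equiv> 1 + ca + cb" and "Y \<equiv> sa + sb"
  defines "p \<equiv> X * sa - Y * ca" and "q \<equiv> X * sb - Y * cb"
  shows "6 * (p\<^sup>2 + p * q + q\<^sup>2) \<le> (X\<^sup>2 + Y\<^sup>2) * (9 - (X\<^sup>2 + Y\<^sup>2))"
proof -
  define F where "F = X\<^sup>2 + Y\<^sup>2"
  define y where "y = X * ca + Y * sa"
  define w where "w = X * cb + Y * sb"
  have "p\<^sup>2 + y\<^sup>2 = F * (ca\<^sup>2 + sa\<^sup>2)"
    unfolding p_def y_def F_def by (simp add: algebra_simps power2_eq_square)
  moreover have "q\<^sup>2 + w\<^sup>2 = F * (cb\<^sup>2 + sb\<^sup>2)"
    unfolding q_def w_def F_def by (simp add: algebra_simps power2_eq_square)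
  ultimately have sum: "p\<^sup>2 + q\<^sup>2 + Y\<^sup>2 + (X\<^sup>2 + y\<^sup>2 + w\<^sup>2) = 3 * F"
    using unit_a unit_b F_def by simp
  have "X + y + w = F"
    unfolding X_def Y_def y_def w_def F_def by (simp add: algebra_simps power2_eq_square)
  then have cauchy_schwarz: "F\<^sup>2 \<le> 3 * (X\<^sup>2 + y\<^sup>2 + w\<^sup>2)"
    using zero_le_power2[of "X - y"] zero_le_power2[of "y - w"] zero_le_power2[of "X - w"]
    by (auto simp: power2_eq_square algebra_simps)
  have "p + q = Y" unfolding p_def q_def X_def Y_def by (simp add: algebra_simps)
  then have "2 * (p\<^sup>2 + p * q + q\<^sup>2) = p\<^sup>2 + q\<^sup>2 + Y\<^sup>2"
    by (auto simp: power2_eq_square algebra_simps)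
  with sum cauchy_schwarz show ?thesis
    unfolding F_def[symmetric] by (simp add: algebra_simps power2_eq_square)
qed

definition structure_factor :: "real \<Rightarrow> real \<Rightarrow> real" where
  "structure_factor a b = 3 + 2 * cos a + 2 * cos b + 2 * cos (a - b)"

definition structure_factor_gradient :: "real \<Rightarrow> real \<Rightarrow> real \<times> real" where
  "structure_factor_gradient a b = (- 2 * (sin a + sin (a - b)), - 2 * (sin b - sin (a - b)))"

lemma cmod_one_plus_cis_cis: "cmod (1 + cis a + cis b) = sqrt (structure_factor a b)"
proof -
  have "(1 + cos a + cos b)\<^sup>2 + (sin a + sin b)\<^sup>2 =
      1 + ((cos a)\<^sup>2 + (sin a)\<^sup>2) + ((cos b)\<^sup>2 + (sin b)\<^sup>2) + 2 * cos a + 2 * cos b + 2 * (cos a * cos b + sin a * sin b)"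
    by algebra
  then show ?thesis by (simp add: cmod_def structure_factor_def cos_diff)
qed

lemma structure_factor_nonneg: "0 \<le> structure_factor a b"
  using cmod_one_plus_cis_cis[of a b] by (metis norm_ge_zero real_sqrt_lt_0_iff not_le)

lemma structure_factor_le_9: "structure_factor a b \<le> 9"
proof -
  have "cmod (1 + cis a + cis b) \<le> 3"
    using norm_triangle_ineq[of "1 + cis a" "cis b"] norm_triangle_ineq[of 1 "cis a"] by simp
  then show ?thesis
    using sqrt_le_D[of "structure_factor a b" 3] by (simp add: cmod_one_plus_cis_cis)
qed

lemma structure_factor_gradient_bound:
  "3 * quad_form 1 (structure_factor_gradient a b) \<le>
     2 * structure_factor a b * (9 - structure_factor a b)"
proof -
  define X Y where "X = 1 + cos a + cos b" and "Y = sin a + sin b"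
  have "X * sin a - Y * cos a = sin a + sin (a - b)"
    and "X * sin b - Y * cos b = sin b - sin (a - b)"
    unfolding X_def Y_def by (simp_all add: sin_diff algebra_simps)
  moreover have "X\<^sup>2 + Y\<^sup>2 = structure_factor a b"
    using cmod_one_plus_cis_cis[of a b] structure_factor_nonneg[of a b]
    by (simp add: X_def Y_def cmod_def)
  ultimately show ?thesis
    using unit_vector_sum_cross_bound[of "cos a" "sin a" "cos b" "sin b"]
    by (simp add: structure_factor_gradient_def quad_form_def X_def Y_def power2_eq_square algebra_simps)
qed

lemma has_derivative_structure_factor:
  "((\<lambda>k. structure_factor (fst k) (snd k)) has_derivative
     (\<lambda>h. structure_factor_gradient a b \<bullet> h)) (at (a, b))"
  unfolding structure_factor_def structure_factor_gradient_def
  by (auto intro!: derivative_eq_intros simp: fun_eq_iff algebra_simps)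

lemma quad_form_reflect: "quad_form (- s) (x, - y) = quad_form s (x, y)"
  by (simp add: quad_form_def)

lemma triangular_branch_bound:
  fixes c :: "real \<times> real \<Rightarrow> real"
  assumes D: "((\<lambda>k. arccos (c k)) has_derivative (\<lambda>h. g \<bullet> h)) (at k)"
    and branch: "c \<in> eig_branches Triangular"
  shows "quad_form (- 1) g \<le> 1 / 2"
proof -
  obtain a b where k: "k = (a, b)" by (cases k)
  from branch have c_def: "c = (\<lambda>(k1, k2). (cos k1 + cos k2 + cos (k1 + k2)) / 3)" by simp
  have c_eq: "c y = (structure_factor (fst y) (- snd y) - 3) / 6" for y
    by (simp add: c_def structure_factor_def case_prod_unfold)
  define F where "F = structure_factor a (- b)"
  define v where "v = structure_factor_gradient a (- b)"
  define d where "d = (1 / 6) *\<^sub>R (fst v, - snd v)"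
  have "\<bar>c y\<bar> \<le> 1" for y
    using structure_factor_nonneg[of "fst y" "- snd y"] structure_factor_le_9[of "fst y" "- snd y"]
    by (simp add: c_eq abs_le_iff)
  then have range: "\<forall>y. \<bar>c y\<bar> \<le> 1" ..
  have "(c has_derivative (\<lambda>h. d \<bullet> h)) (at k)"
    unfolding c_def k d_def v_def structure_factor_gradient_def
    by (auto intro!: derivative_eq_intros simp: fun_eq_iff algebra_simps)
  moreover have "quad_form (- 1) d \<le> 1 / 2 * (1 - c k ^ 2)"
  proof -
    have "quad_form (- 1) d = (1 / 6)\<^sup>2 * quad_form 1 v"
      by (simp only: d_def quad_form_scaleR quad_form_reflect prod.collapse)
    also have "\<dots> \<le> F * (9 - F) / 54"
      using structure_factor_gradient_bound[of a "- b"] by (simp add: F_def v_def power2_eq_square)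
    also have "\<dots> \<le> 1 / 2 * (1 - c k ^ 2)"
      using zero_le_power2[of "9 - F"]
      by (simp add: c_eq k F_def[symmetric] power2_eq_square field_simps)
    finally show ?thesis .
  qed
  ultimately show ?thesis
    by (intro arccos_gradient_quad_form_le[OF D range, of "1 / 2" d]) auto
qed

lemma affine_sqrt_structure_factor_branch_bound:
  fixes c :: "real \<times> real \<Rightarrow> real"
  assumes D: "((\<lambda>k. arccos (c k)) has_derivative (\<lambda>h. g \<bullet> h)) (at k)"
    and c_def: "c = (\<lambda>k. \<alpha> + \<beta> * sqrt (structure_factor (fst k) (snd k)))"
    and "0 \<le> r"
    and range: "\<And>m. 0 \<le> m \<Longrightarrow> m \<le> 3 \<Longrightarrow> \<bar>\<alpha> + \<beta> * m\<bar> \<le> 1"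
    and ineq: "\<And>m. 0 < m \<Longrightarrow> m \<le> 3 \<Longrightarrow> \<beta>\<^sup>2 * (9 - m\<^sup>2) / 6 \<le> r * (1 - (\<alpha> + \<beta> * m)\<^sup>2)"
  shows "quad_form 1 g \<le> r"
proof -
  obtain a b where k: "k = (a, b)" by (cases k)
  define F where "F = structure_factor a b"
  define m where "m = sqrt F"
  have sqrt_bounds: "0 \<le> sqrt (structure_factor x y) \<and> sqrt (structure_factor x y) \<le> 3" for x y
    using structure_factor_nonneg structure_factor_le_9 real_sqrt_le_iff[of _ 9] by auto
  have c_range: "\<forall>y. \<bar>c y\<bar> \<le> 1"
  proof
    fix y
    show "\<bar>c y\<bar> \<le> 1"
      unfolding c_def by (intro range) (simp_all add: sqrt_bounds structure_factor_nonneg)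
  qed
  have ck: "c k = \<alpha> + \<beta> * m" by (simp add: c_def k m_def F_def)
  show ?thesis
  proof (rule arccos_gradient_quad_form_le[OF D c_range \<open>0 \<le> r\<close>])
    define d where "d = (\<beta> / (2 * m)) *\<^sub>R structure_factor_gradient a b"
    show "(\<forall>y. c y \<le> c k) \<or> (\<forall>y. c k \<le> c y) \<or>
      (c has_derivative (\<lambda>h. d \<bullet> h)) (at k) \<and> quad_form 1 d \<le> r * (1 - c k ^ 2)"
    proof (cases "m = 0")
      case True
      then show ?thesis
        using sqrt_bounds ck by (cases "0 \<le> \<beta>") (auto simp: c_def mult_nonneg_nonneg mult_nonpos_nonneg)
    next
      case False
      then have "0 < F" "0 < m" "m \<le> 3"
        using sqrt_bounds[of a b] structure_factor_nonneg[of a b] by (auto simp: m_def F_def)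
      have "((\<lambda>k. sqrt (structure_factor (fst k) (snd k))) has_derivative
          (\<lambda>h. structure_factor_gradient a b \<bullet> h * (inverse m / 2))) (at k)"
        unfolding k m_def
        using DERIV_compose_FDERIV[OF DERIV_real_sqrt has_derivative_structure_factor] \<open>0 < F\<close>
        by (simp add: F_def)
      then have "(c has_derivative (\<lambda>h. 0 + \<beta> * (structure_factor_gradient a b \<bullet> h * (inverse m / 2)))) (at k)"
        unfolding c_def by (intro has_derivative_add has_derivative_const has_derivative_mult_right)
      then have "(c has_derivative (\<lambda>h. d \<bullet> h)) (at k)"
        by (rule has_derivative_eq_rhs) (simp add: d_def fun_eq_iff field_simps)
      moreover have "quad_form 1 d \<le> r * (1 - c k ^ 2)"
      proof -
        have "quad_form 1 d = \<beta>\<^sup>2 / (4 * F) * quad_form 1 (structure_factor_gradient a b)"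
          using \<open>0 < F\<close> by (simp add: d_def m_def power_divide power_mult_distrib)
        also have "\<dots> \<le> \<beta>\<^sup>2 / (4 * F) * (2 * F * (9 - F) / 3)"
          using structure_factor_gradient_bound[of a b] \<open>0 < F\<close>
          by (intro mult_left_mono) (auto simp: F_def)
        also have "\<dots> = \<beta>\<^sup>2 * (9 - m\<^sup>2) / 6"
          using \<open>0 < F\<close> by (simp add: m_def field_simps)
        also have "\<dots> \<le> r * (1 - c k ^ 2)"
          using ineq[OF \<open>0 < m\<close> \<open>m \<le> 3\<close>] ck by simp
        finally show ?thesis .
      qed
      ultimately show ?thesis by blast
    qed
  qed
qed

lemma eig_branch_cmod_eq:
  "(\<lambda>(k1, k2). f (cmod (1 + cis k1 + cis k2))) = (\<lambda>k. f (sqrt (structure_factor (fst k) (snd k))))"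
  by (simp add: case_prod_unfold cmod_one_plus_cis_cis)

lemma hexagonal_branch_bound:
  fixes c :: "real \<times> real \<Rightarrow> real"
  assumes D: "((\<lambda>k. arccos (c k)) has_derivative (\<lambda>h. g \<bullet> h)) (at k)"
    and branch: "c \<in> eig_branches Hexagonal"
  shows "quad_form 1 g \<le> 1 / 6"
proof -
  have "c = (\<lambda>k. 0 + 1 / 3 * sqrt (structure_factor (fst k) (snd k))) \<or>
      c = (\<lambda>k. 0 + - 1 / 3 * sqrt (structure_factor (fst k) (snd k)))"
    using branch
    unfolding eig_branches.simps eig_branch_cmod_eq[of "\<lambda>m. m / 3"] eig_branch_cmod_eq[of "\<lambda>m. - (m / 3)"]
    by (auto simp: fun_eq_iff)
  then obtain \<beta> where \<beta>: "\<beta> = 1 / 3 \<or> \<beta> = - 1 / 3"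
    and c: "c = (\<lambda>k. 0 + \<beta> * sqrt (structure_factor (fst k) (snd k)))" by blast
  show ?thesis
    by (rule affine_sqrt_structure_factor_branch_bound[OF D c])
      (use \<beta> in \<open>elim disjE; hypsubst; simp add: abs_le_iff power2_eq_square field_simps\<close>)+
qed

lemma kagome_branch_bound:
  fixes c :: "real \<times> real \<Rightarrow> real"
  assumes D: "((\<lambda>k. arccos (c k)) has_derivative (\<lambda>h. g \<bullet> h)) (at k)"
    and branch: "c \<in> eig_branches Kagome"
  shows "quad_form 1 g \<le> 1 / 4"
proof (cases "c = (\<lambda>_. - 1 / 2)")
  case True
  then have "g = 0"
    by (intro arccos_gradient_eq_0_at_extremum[OF D]) simp_all
  then show ?thesis by (simp add: quad_form_def)
next
  case False
  have "c = (\<lambda>k. 1 / 4 + 1 / 4 * sqrt (structure_factor (fst k) (snd k))) \<or>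
      c = (\<lambda>k. 1 / 4 + - 1 / 4 * sqrt (structure_factor (fst k) (snd k)))"
    using branch False
    unfolding eig_branches.simps eig_branch_cmod_eq[of "\<lambda>m. (1 + m) / 4"] eig_branch_cmod_eq[of "\<lambda>m. (1 - m) / 4"]
    by (auto simp: fun_eq_iff field_simps)
  then obtain \<beta> where \<beta>: "\<beta> = 1 / 4 \<or> \<beta> = - 1 / 4"
    and c: "c = (\<lambda>k. 1 / 4 + \<beta> * sqrt (structure_factor (fst k) (snd k)))" by blast
  have ineq: "\<beta>\<^sup>2 * (9 - m\<^sup>2) / 6 \<le> 1 / 4 * (1 - (1 / 4 + \<beta> * m)\<^sup>2)" if "0 < m" "m \<le> 3" for m
  proof -
    have "0 \<le> (3 - m) * (9 + m)" "0 \<le> (9 - m) * (3 + m)"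
      using that by simp_all
    with \<beta> show ?thesis by (elim disjE; hypsubst; simp add: power2_eq_square field_simps)
  qed
  show ?thesis
    by (rule affine_sqrt_structure_factor_branch_bound[OF D c _ _ ineq])
      (use \<beta> in \<open>elim disjE; hypsubst; simp add: abs_le_iff\<close>)+
qed

lemma inner_prod_real: "(x :: real \<times> real) \<bullet> h = fst x * fst h + snd x * snd h"
  by (simp add: inner_prod_def)

theorem theorem4:
  fixes G :: lattice
  shows "orbit G \<subseteq> {(x, y). x ^ 2 + s_param G * x * y + y ^ 2 \<le> r_param G}"
proof
  fix g
  assume "g \<in> orbit G"
  then obtain c k where branch: "c \<in> eig_branches G"
    and D: "((\<lambda>k. arccos (c k)) has_derivative (\<lambda>h. g \<bullet> h)) (at k)"
    unfolding orbit_def inner_prod_real by blast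
  have "quad_form (s_param G) g \<le> r_param G"
  proof (cases G)
    case Triangular
    then show ?thesis using triangular_branch_bound[OF D] branch by simp
  next
    case Hexagonal
    then show ?thesis using hexagonal_branch_bound[OF D] branch by simp
  next
    case Kagome
    then show ?thesis using kagome_branch_bound[OF D] branch by simp
  qed
  then show "g \<in> {(x, y). x ^ 2 + s_param G * x * y + y ^ 2 \<le> r_param G}"
    by (cases g) (simp add: quad_form_def)
qed

end
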